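(* If $X,Y,Z$ are independent real-valued continuous random variables, then $$h(X+Y+Z)+h(Y)\leq h(X+Y)+h(Y+Z),$$ and this is equivalent to the mutual information inequality $$I(X+Y+Z;X)\leq I(X+Y;X).$$
   Context: Standing conventions: all random variables are real-valued with densities (random vectors have joint densities), and every differential entropy appearing is assumed to exist and be finite. $h$ denotes differential entropy and $I(U;V)=h(U)+h(V)-h(U,V)$ mutual information. *)

theory Defs
  imports "HOL-Probability.Probability"
begin

definition dent :: "'a measure \<Rightarrow> 'b measure \<Rightarrow> ('a \<Rightarrow> 'b) \<Rightarrow> real" where
  "dent M S U = prob_space.entropy M (exp 1) S U"

definition has_finite_dent :: "'a measure \<Rightarrow> 'b measure \<Rightarrow> ('a \<Rightarrow> 'b) \<Rightarrow> bool" where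
  "has_finite_dent M S U \<longleftrightarrow> (\<exists>f. information_space.finite_entropy M (exp 1) S U f)"

definition mutinf :: "'a measure \<Rightarrow> ('a \<Rightarrow> real) \<Rightarrow> ('a \<Rightarrow> real) \<Rightarrow> real" where
  "mutinf M U V = dent M lborel U + dent M lborel V
      - dent M (lborel \<Otimes>\<^sub>M lborel) (\<lambda>\<omega>. (U \<omega>, V \<omega>))"

end

theory Submission
  imports Defs
begin

(*
  Write u, w, s, g for the densities of X+Y, Y+Z, X+Y+Z and Y.  The deficit
  h(X+Y) + h(Y+Z) - h(X+Y+Z) - h(Y) equals -E[ln R] for the likelihood ratio
  R = u(X+Y) w(Y+Z) / (s(X+Y+Z) g(Y)).  By Gibbs' inequality (ln r \<le> r - 1) it is
  nonnegative once E[R] \<le> 1.  Integrating R against the product density of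
  (X,Y,Z), the factor g(y) cancels, and the substitution t = x+y+z turns the
  triple integral into  \<integral> (w * f_X)(t) (u * f_Z)(t) / s(t) dt, where both
  convolutions are densities of X+Y+Z, i.e. equal s a.e.; hence E[R] \<le> \<integral> s = 1.

  For the mutual-information form we use that (A+B, B) is a shear of (A, B), so
  for independent A, B the joint entropy h(A+B, B) equals h(A) + h(B); this gives
  I(X+Y+Z; X) = h(X+Y+Z) - h(Y+Z) and I(X+Y; X) = h(X+Y) - h(Y).
*)

section \<open>Two facts about Lebesgue integrals on the line and the plane\<close>

text \<open>The shear (a, b) \<mapsto> (a + b, b) preserves Lebesgue measure on the plane, so it
  transports a density d to d \<circ> (inverse shear).\<close>
lemma density_shear:
  fixes d :: "real \<times> real \<Rightarrow> ennreal"
  assumes [measurable]: "d \<in> borel_measurable (lborel \<Otimes>\<^sub>M lborel)"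
  shows "distr (density (lborel \<Otimes>\<^sub>M lborel) d) (lborel \<Otimes>\<^sub>M lborel) (\<lambda>(a, b). (a + b, b))
       = density (lborel \<Otimes>\<^sub>M lborel) (\<lambda>(s, b). d (s - b, b))"
proof (rule measure_eqI)
  fix E assume "E \<in> sets (distr (density (lborel \<Otimes>\<^sub>M lborel) d) (lborel \<Otimes>\<^sub>M lborel) (\<lambda>(a, b). (a + b, b)))"
  then have [measurable]: "E \<in> sets (lborel \<Otimes>\<^sub>M lborel)" by simp
  have shift: "(\<integral>\<^sup>+a. d (a, b) * indicator E (a + b, b) \<partial>lborel) = (\<integral>\<^sup>+s. d (s - b, b) * indicator E (s, b) \<partial>lborel)"
    for b :: real
    using nn_integral_real_affine[of "\<lambda>s. d (s - b, b) * indicator E (s, b)" 1 b] by (simp add: add.commute)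
  have "emeasure (distr (density (lborel \<Otimes>\<^sub>M lborel) d) (lborel \<Otimes>\<^sub>M lborel) (\<lambda>(a, b). (a + b, b))) E
      = (\<integral>\<^sup>+p. d p * indicator E (fst p + snd p, snd p) \<partial>(lborel \<Otimes>\<^sub>M lborel))"
    by (subst emeasure_distr, measurable, subst emeasure_density, measurable)
       (auto simp: split_beta' indicator_def space_pair_measure intro!: nn_integral_cong)
  also have "\<dots> = (\<integral>\<^sup>+b. \<integral>\<^sup>+a. d (a, b) * indicator E (a + b, b) \<partial>lborel \<partial>lborel)"
    by (subst lborel_pair.nn_integral_snd[symmetric]) auto
  also have "\<dots> = (\<integral>\<^sup>+b. \<integral>\<^sup>+s. d (s - b, b) * indicator E (s, b) \<partial>lborel \<partial>lborel)"
    by (simp add: shift)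
  also have "\<dots> = emeasure (density (lborel \<Otimes>\<^sub>M lborel) (\<lambda>(s, b). d (s - b, b))) E"
    by (subst emeasure_density, measurable, subst lborel_pair.nn_integral_snd[symmetric])
       (auto simp: split_beta')
  finally show "emeasure (distr (density (lborel \<Otimes>\<^sub>M lborel) d) (lborel \<Otimes>\<^sub>M lborel) (\<lambda>(a, b). (a + b, b))) E
      = emeasure (density (lborel \<Otimes>\<^sub>M lborel) (\<lambda>(s, b). d (s - b, b))) E" .
qed simp

text \<open>Substituting t = x + y + z in the inner integral, a triple integral whose
  integrand couples the variables through x + y, y + z and x + y + z becomes a
  single integral of a product of two convolutions.\<close>
lemma nn_integral_triple_convolution:
  fixes f h p q r :: "real \<Rightarrow> ennreal"
  assumes [measurable]: "f \<in> borel_measurable borel" "h \<in> borel_measurable borel"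
    "p \<in> borel_measurable borel" "q \<in> borel_measurable borel" "r \<in> borel_measurable borel"
  shows "(\<integral>\<^sup>+x. \<integral>\<^sup>+y. \<integral>\<^sup>+z. f x * h z * p (x + y) * q (y + z) * r (x + y + z) \<partial>lborel \<partial>lborel \<partial>lborel)
       = (\<integral>\<^sup>+t. (\<integral>\<^sup>+x. q (t - x) * f x \<partial>lborel) * r t * (\<integral>\<^sup>+z. p (t - z) * h z \<partial>lborel) \<partial>lborel)"
proof -
  have shift: "(\<integral>\<^sup>+y. f x * h z * p (x + y) * q (y + z) * r (x + y + z) \<partial>lborel)
      = (\<integral>\<^sup>+t. f x * h z * p (t - z) * q (t - x) * r t \<partial>lborel)" for x z :: real
    using nn_integral_real_affine[of "\<lambda>y. f x * h z * p (x + y) * q (y + z) * r (x + y + z)" 1 "- (x + z)"]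
    by (simp add: algebra_simps)
  have inner: "(\<integral>\<^sup>+x. \<integral>\<^sup>+z. f x * h z * p (t - z) * q (t - x) * r t \<partial>lborel \<partial>lborel)
      = (\<integral>\<^sup>+x. q (t - x) * f x \<partial>lborel) * r t * (\<integral>\<^sup>+z. p (t - z) * h z \<partial>lborel)" for t :: real
  proof -
    have "(\<integral>\<^sup>+z. f x * h z * p (t - z) * q (t - x) * r t \<partial>lborel)
        = q (t - x) * f x * (r t * (\<integral>\<^sup>+z. p (t - z) * h z \<partial>lborel))" for x
      using nn_integral_cmult[of "\<lambda>z. p (t - z) * h z" lborel "q (t - x) * f x * r t"]
      by (simp add: ac_simps)
    then have "(\<integral>\<^sup>+x. \<integral>\<^sup>+z. f x * h z * p (t - z) * q (t - x) * r t \<partial>lborel \<partial>lborel)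
        = (\<integral>\<^sup>+x. q (t - x) * f x * (r t * (\<integral>\<^sup>+z. p (t - z) * h z \<partial>lborel)) \<partial>lborel)"
      by simp
    also have "\<dots> = (\<integral>\<^sup>+x. q (t - x) * f x \<partial>lborel) * (r t * (\<integral>\<^sup>+z. p (t - z) * h z \<partial>lborel))"
      by (rule nn_integral_multc) simp
    finally show ?thesis by (simp add: ac_simps)
  qed
  have "(\<integral>\<^sup>+x. \<integral>\<^sup>+y. \<integral>\<^sup>+z. f x * h z * p (x + y) * q (y + z) * r (x + y + z) \<partial>lborel \<partial>lborel \<partial>lborel)
      = (\<integral>\<^sup>+x. \<integral>\<^sup>+z. \<integral>\<^sup>+y. f x * h z * p (x + y) * q (y + z) * r (x + y + z) \<partial>lborel \<partial>lborel \<partial>lborel)"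
    by (intro nn_integral_cong lborel_pair.Fubini'[symmetric]) measurable
  also have "\<dots> = (\<integral>\<^sup>+x. \<integral>\<^sup>+z. \<integral>\<^sup>+t. f x * h z * p (t - z) * q (t - x) * r t \<partial>lborel \<partial>lborel \<partial>lborel)"
    by (simp add: shift)
  also have "\<dots> = (\<integral>\<^sup>+x. \<integral>\<^sup>+t. \<integral>\<^sup>+z. f x * h z * p (t - z) * q (t - x) * r t \<partial>lborel \<partial>lborel \<partial>lborel)"
    by (intro nn_integral_cong lborel_pair.Fubini'[symmetric]) measurable
  also have "\<dots> = (\<integral>\<^sup>+t. \<integral>\<^sup>+x. \<integral>\<^sup>+z. f x * h z * p (t - z) * q (t - x) * r t \<partial>lborel \<partial>lborel \<partial>lborel)"
    by (intro lborel_pair.Fubini'[symmetric]) measurable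
  finally show ?thesis by (simp add: inner)
qed

section \<open>Independence\<close>

context prob_space
begin

lemma product_distr_compose:
  assumes U[measurable]: "U \<in> measurable M S" and V[measurable]: "V \<in> measurable M T"
    and prod: "distr M S U \<Otimes>\<^sub>M distr M T V = distr M (S \<Otimes>\<^sub>M T) (\<lambda>\<omega>. (U \<omega>, V \<omega>))"
    and f[measurable]: "f \<in> measurable S S'" and g[measurable]: "g \<in> measurable T T'"
  shows "distr M S' (\<lambda>\<omega>. f (U \<omega>)) \<Otimes>\<^sub>M distr M T' (\<lambda>\<omega>. g (V \<omega>))
       = distr M (S' \<Otimes>\<^sub>M T') (\<lambda>\<omega>. (f (U \<omega>), g (V \<omega>)))"
proof -
  have "prob_space (distr (distr M T V) T' g)"
    by (intro prob_space.prob_space_distr prob_space_distr) simp_all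
  then have sf: "sigma_finite_measure (distr (distr M T V) T' g)"
    by (rule prob_space_imp_sigma_finite)
  have "distr M S' (\<lambda>\<omega>. f (U \<omega>)) \<Otimes>\<^sub>M distr M T' (\<lambda>\<omega>. g (V \<omega>))
      = distr (distr M S U) S' f \<Otimes>\<^sub>M distr (distr M T V) T' g"
    by (simp add: distr_distr comp_def)
  also have "\<dots> = distr (distr M S U \<Otimes>\<^sub>M distr M T V) (S' \<Otimes>\<^sub>M T') (\<lambda>(x, y). (f x, g y))"
    by (rule pair_measure_distr[OF _ _ sf]) simp_all
  also have "\<dots> = distr M (S' \<Otimes>\<^sub>M T') (\<lambda>\<omega>. (f (U \<omega>), g (V \<omega>)))"
    unfolding prod by (simp add: distr_distr comp_def)
  finally show ?thesis .
qed

lemma indep_var_of_disjoint_blocks: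
  assumes ind: "indep_vars (\<lambda>_. borel) Xs I"
    and blocks: "A \<inter> B = {}" "A \<subseteq> I" "B \<subseteq> I"
    and F: "F \<in> measurable (PiM A (\<lambda>_. borel)) N1"
    and G: "G \<in> measurable (PiM B (\<lambda>_. borel)) N2"
  shows "indep_var N1 (\<lambda>\<omega>. F (\<lambda>i\<in>A. Xs i \<omega>)) N2 (\<lambda>\<omega>. G (\<lambda>i\<in>B. Xs i \<omega>))"
  using indep_var_compose[OF indep_var_restrict[OF ind blocks] F G] by (simp add: comp_def)

section \<open>Differential entropy as an expectation\<close>

lemma information_space_exp1: "information_space M (exp 1)"
  by (simp add: information_space_def information_space_axioms_def prob_space_axioms)

lemma dent_eq_neg_expectation:
  assumes F: "information_space.finite_entropy M (exp 1) S V p"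
  shows "dent M S V = - (\<integral>\<omega>. ln (p (V \<omega>)) \<partial>M)"
    and "integrable M (\<lambda>\<omega>. ln (p (V \<omega>)))"
proof -
  interpret information_space M "exp 1" by (rule information_space_exp1)
  have D: "distributed M S V p" and nn: "\<And>x. x \<in> space S \<Longrightarrow> 0 \<le> p x"
    and I: "integrable S (\<lambda>x. p x * log (exp 1) (p x))"
    using F by (auto simp: finite_entropy_def)
  have [measurable]: "p \<in> borel_measurable S" using finite_entropy_measurable[OF F] .
  have "dent M S V = - (\<integral>x. p x * log (exp 1) (p x) \<partial>S)"
    unfolding dent_def by (rule entropy_distr[OF D nn])
  also have "(\<integral>x. p x * log (exp 1) (p x) \<partial>S) = (\<integral>\<omega>. log (exp 1) (p (V \<omega>)) \<partial>M)"
    by (rule distributed_integral[OF D _ nn]) simp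
  finally show "dent M S V = - (\<integral>\<omega>. ln (p (V \<omega>)) \<partial>M)" by (simp add: log_def)
  have "integrable M (\<lambda>\<omega>. log (exp 1) (p (V \<omega>)))"
    using distributed_integrable[OF D _ nn, of "\<lambda>x. log (exp 1) (p x)"] I by simp
  then show "integrable M (\<lambda>\<omega>. ln (p (V \<omega>)))" by (simp add: log_def)
qed

lemma finite_entropy_density_pos_AE:
  assumes F: "information_space.finite_entropy M (exp 1) S V p"
  shows "AE \<omega> in M. 0 < p (V \<omega>)"
proof -
  interpret information_space M "exp 1" by (rule information_space_exp1)
  have [measurable]: "p \<in> borel_measurable S" using finite_entropy_measurable[OF F] .
  show ?thesis
    using distributed_AE2[OF finite_entropy_distributed[OF F], of "\<lambda>x. 0 < p x"] by simp
qed

lemma distributed_shear: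
  fixes A B :: "'a \<Rightarrow> real"
  assumes D: "distributed M (lborel \<Otimes>\<^sub>M lborel) (\<lambda>\<omega>. (A \<omega>, B \<omega>)) d"
  shows "distributed M (lborel \<Otimes>\<^sub>M lborel) (\<lambda>\<omega>. (A \<omega> + B \<omega>, B \<omega>)) (\<lambda>(s, b). d (s - b, b))"
proof -
  have [measurable]: "d \<in> borel_measurable (lborel \<Otimes>\<^sub>M lborel)"
    using distributed_borel_measurable[OF D] by simp
  have AB[measurable]: "(\<lambda>\<omega>. (A \<omega>, B \<omega>)) \<in> measurable M (lborel \<Otimes>\<^sub>M lborel)"
    using distributed_measurable[OF D] .
  have "distr M (lborel \<Otimes>\<^sub>M lborel) (\<lambda>\<omega>. (A \<omega> + B \<omega>, B \<omega>))
      = distr (distr M (lborel \<Otimes>\<^sub>M lborel) (\<lambda>\<omega>. (A \<omega>, B \<omega>))) (lborel \<Otimes>\<^sub>M lborel) (\<lambda>(a, b). (a + b, b))"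
    by (subst distr_distr) (auto simp: comp_def)
  also have "\<dots> = density (lborel \<Otimes>\<^sub>M lborel) (\<lambda>(s, b). d (s - b, b))"
    unfolding distributed_distr_eq_density[OF D] by (rule density_shear) simp
  moreover have [measurable]: "A \<in> borel_measurable M" "B \<in> borel_measurable M"
    using measurable_compose[OF AB measurable_fst] measurable_compose[OF AB measurable_snd]
    by (simp_all add: comp_def)
  ultimately show ?thesis
    unfolding distributed_def by simp
qed

text \<open>For independent A and B, the pair (A + B, B) has entropy h(A) + h(B): its
  density is (s, y) \<mapsto> a(s - y) b(y), so ln q(A + B, B) = ln a(A) + ln b(B) a.s.\<close>
lemma dent_shear_indep:
  fixes A B :: "'a \<Rightarrow> real"
  assumes FA: "information_space.finite_entropy M (exp 1) lborel A a"
    and FB: "information_space.finite_entropy M (exp 1) lborel B b"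
    and FQ: "information_space.finite_entropy M (exp 1) (lborel \<Otimes>\<^sub>M lborel) (\<lambda>\<omega>. (A \<omega> + B \<omega>, B \<omega>)) q"
    and ind: "indep_var lborel A lborel B"
  shows "dent M (lborel \<Otimes>\<^sub>M lborel) (\<lambda>\<omega>. (A \<omega> + B \<omega>, B \<omega>)) = dent M lborel A + dent M lborel B"
proof -
  interpret information_space M "exp 1" by (rule information_space_exp1)
  have DA: "distributed M lborel A a" and DB: "distributed M lborel B b"
    and DQ: "distributed M (lborel \<Otimes>\<^sub>M lborel) (\<lambda>\<omega>. (A \<omega> + B \<omega>, B \<omega>)) q"
    using FA FB FQ by (simp_all add: finite_entropy_distributed)
  have [measurable]: "A \<in> borel_measurable M" "B \<in> borel_measurable M"
    using distributed_measurable[OF DA] distributed_measurable[OF DB] by simp_all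
  have [measurable]: "a \<in> borel_measurable borel" "b \<in> borel_measurable borel"
    "q \<in> borel_measurable (lborel \<Otimes>\<^sub>M lborel)"
    using finite_entropy_measurable[OF FA] finite_entropy_measurable[OF FB]
      finite_entropy_measurable[OF FQ] by simp_all
  have nn: "\<And>x. 0 \<le> a x" "\<And>x. 0 \<le> b x" "\<And>x. 0 \<le> q x"
    using FA FB FQ by (simp_all add: finite_entropy_nn space_pair_measure)
  have joint: "distributed M (lborel \<Otimes>\<^sub>M lborel) (\<lambda>\<omega>. (A \<omega>, B \<omega>)) (\<lambda>(x, y). ennreal (a x) * ennreal (b y))"
    by (rule distributed_joint_indep[OF _ _ DA DB ind]) (simp_all add: lborel.sigma_finite_measure_axioms)
  have "distributed M (lborel \<Otimes>\<^sub>M lborel) (\<lambda>\<omega>. (A \<omega> + B \<omega>, B \<omega>)) (\<lambda>(s, y). ennreal (a (s - y)) * ennreal (b y))"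
    using distributed_shear[OF joint] by (simp add: split_beta')
  then have "AE p in lborel \<Otimes>\<^sub>M lborel. ennreal (q p) = ennreal (a (fst p - snd p)) * ennreal (b (snd p))"
    using distributed_unique[OF DQ] by (simp add: split_beta')
  then have "AE \<omega> in M. ennreal (q (A \<omega> + B \<omega>, B \<omega>)) = ennreal (a (A \<omega>)) * ennreal (b (B \<omega>))"
    using distributed_AE2[OF DQ, of "\<lambda>p. ennreal (q p) = ennreal (a (fst p - snd p)) * ennreal (b (snd p))"]
    by (auto elim: AE_mp)
  then have ln_q: "AE \<omega> in M. ln (q (A \<omega> + B \<omega>, B \<omega>)) = ln (a (A \<omega>)) + ln (b (B \<omega>))"
    using finite_entropy_density_pos_AE[OF FA] finite_entropy_density_pos_AE[OF FB]
    by eventually_elim (use nn in \<open>simp add: ennreal_mult[symmetric] ln_mult\<close>)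
  have "dent M (lborel \<Otimes>\<^sub>M lborel) (\<lambda>\<omega>. (A \<omega> + B \<omega>, B \<omega>)) = - (\<integral>\<omega>. ln (q (A \<omega> + B \<omega>, B \<omega>)) \<partial>M)"
    by (rule dent_eq_neg_expectation(1)[OF FQ])
  also have "(\<integral>\<omega>. ln (q (A \<omega> + B \<omega>, B \<omega>)) \<partial>M) = (\<integral>\<omega>. ln (a (A \<omega>)) + ln (b (B \<omega>)) \<partial>M)"
    by (rule integral_cong_AE) (use ln_q in auto)
  also have "\<dots> = (\<integral>\<omega>. ln (a (A \<omega>)) \<partial>M) + (\<integral>\<omega>. ln (b (B \<omega>)) \<partial>M)"
    using dent_eq_neg_expectation(2)[OF FA] dent_eq_neg_expectation(2)[OF FB] by simp
  finally show ?thesis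
    using dent_eq_neg_expectation(1)[OF FA] dent_eq_neg_expectation(1)[OF FB] by simp
qed

text \<open>Gibbs' inequality: if R \<ge> 0 has expectation at most 1, then E[ln R] \<le> 0.
  It follows from ln r \<le> r - 1.\<close>
lemma expectation_ln_le_zero:
  assumes [measurable]: "R \<in> borel_measurable M" and R_nonneg: "\<And>\<omega>. 0 \<le> R \<omega>"
    and R_le: "(\<integral>\<^sup>+\<omega>. ennreal (R \<omega>) \<partial>M) \<le> 1"
    and L: "integrable M L" and L_ln: "AE \<omega> in M. 0 < R \<omega> \<and> L \<omega> = ln (R \<omega>)"
  shows "(\<integral>\<omega>. L \<omega> \<partial>M) \<le> 0"
proof -
  have R: "integrable M R"
    using R_nonneg R_le by (intro integrableI_nonneg) (auto simp: top_unique intro: le_less_trans)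
  have "(\<integral>\<omega>. R \<omega> \<partial>M) = enn2real (\<integral>\<^sup>+\<omega>. ennreal (R \<omega>) \<partial>M)"
    using R_nonneg by (intro integral_eq_nn_integral) auto
  also have "\<dots> \<le> 1"
    using enn2real_mono[OF R_le] by simp
  finally have ER: "(\<integral>\<omega>. R \<omega> \<partial>M) \<le> 1" .
  have "(\<integral>\<omega>. L \<omega> \<partial>M) \<le> (\<integral>\<omega>. R \<omega> - 1 \<partial>M)"
    using L_ln by (intro integral_mono_AE L) (auto simp: R intro!: ln_le_minus_one)
  also have "\<dots> = (\<integral>\<omega>. R \<omega> \<partial>M) - 1"
    using R by (simp add: prob_space)
  finally show ?thesis using ER by simp
qed

section \<open>Three independent real random variables\<close>

context
  fixes X Y Z :: "'a \<Rightarrow> real"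
  assumes ind: "indep_vars (\<lambda>_. borel) (\<lambda>i::nat. if i = 0 then X else if i = 1 then Y else Z) {0, 1, 2}"
begin

text \<open>X is independent of the pair (Y, Z).  Since indep_var needs both variables
  to have the same type, this is stated via the joint distribution.\<close>
lemma indep3_pair_distr:
  "distr M lborel X \<Otimes>\<^sub>M distr M (lborel \<Otimes>\<^sub>M lborel) (\<lambda>\<omega>. (Y \<omega>, Z \<omega>))
     = distr M (lborel \<Otimes>\<^sub>M (lborel \<Otimes>\<^sub>M lborel)) (\<lambda>\<omega>. (X \<omega>, (Y \<omega>, Z \<omega>)))"
proof -
  define Xs where "Xs = (\<lambda>i::nat. if i = 0 then X else if i = 1 then Y else Z)"
  let ?R0 = "\<lambda>\<omega>. \<lambda>i\<in>{0}. Xs i \<omega>" and ?R12 = "\<lambda>\<omega>. \<lambda>i\<in>{1,2}. Xs i \<omega>"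
  have "indep_var (PiM {0} (\<lambda>_. borel)) ?R0 (PiM {1,2} (\<lambda>_. borel)) ?R12"
    using ind unfolding Xs_def by (intro indep_var_restrict) auto
  then have "distr M lborel (\<lambda>\<omega>. ?R0 \<omega> 0) \<Otimes>\<^sub>M distr M (lborel \<Otimes>\<^sub>M lborel) (\<lambda>\<omega>. (?R12 \<omega> 1, ?R12 \<omega> 2))
     = distr M (lborel \<Otimes>\<^sub>M (lborel \<Otimes>\<^sub>M lborel)) (\<lambda>\<omega>. (?R0 \<omega> 0, (?R12 \<omega> 1, ?R12 \<omega> 2)))"
    unfolding indep_var_distribution_eq
    by (intro product_distr_compose[where U = ?R0 and V = ?R12 and S = "PiM {0} (\<lambda>_. borel)"
        and T = "PiM {1,2} (\<lambda>_. borel)" and f = "\<lambda>h. h 0" and g = "\<lambda>h. (h 1, h 2)"]) auto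
  then show ?thesis by (simp add: Xs_def)
qed

lemma indep3_pairs:
  shows "indep_var lborel Y lborel Z"
    and "indep_var lborel Y lborel X"
    and "indep_var lborel (\<lambda>\<omega>. Y \<omega> + Z \<omega>) lborel X"
    and "indep_var borel (\<lambda>\<omega>. Y \<omega> + Z \<omega>) borel X"
    and "indep_var borel (\<lambda>\<omega>. X \<omega> + Y \<omega>) borel Z"
  using indep_var_of_disjoint_blocks[OF ind, of "{1}" "{2}" "\<lambda>f. f 1" lborel "\<lambda>f. f 2" lborel]
    indep_var_of_disjoint_blocks[OF ind, of "{1}" "{0}" "\<lambda>f. f 1" lborel "\<lambda>f. f 0" lborel]
    indep_var_of_disjoint_blocks[OF ind, of "{1,2}" "{0}" "\<lambda>f. f 1 + f 2" lborel "\<lambda>f. f 0" lborel]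
    indep_var_of_disjoint_blocks[OF ind, of "{1,2}" "{0}" "\<lambda>f. f 1 + f 2" borel "\<lambda>f. f 0" borel]
    indep_var_of_disjoint_blocks[OF ind, of "{0,1}" "{2}" "\<lambda>f. f 0 + f 1" borel "\<lambda>f. f 2" borel]
  by simp_all

lemma nn_integral_indep3:
  fixes H :: "real \<times> real \<times> real \<Rightarrow> ennreal"
  assumes DX: "distributed M lborel X f" and DY: "distributed M lborel Y g"
    and DZ: "distributed M lborel Z k"
    and [measurable]: "H \<in> borel_measurable (lborel \<Otimes>\<^sub>M (lborel \<Otimes>\<^sub>M lborel))"
  shows "(\<integral>\<^sup>+\<omega>. H (X \<omega>, Y \<omega>, Z \<omega>) \<partial>M)
       = (\<integral>\<^sup>+x. \<integral>\<^sup>+y. \<integral>\<^sup>+z. f x * g y * k z * H (x, y, z) \<partial>lborel \<partial>lborel \<partial>lborel)"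
proof -
  have sf: "sigma_finite_measure (lborel :: real measure)"
    by (rule lborel.sigma_finite_measure_axioms)
  have sf2: "sigma_finite_measure (lborel \<Otimes>\<^sub>M lborel :: (real \<times> real) measure)"
    by (intro sigma_finite_pair_measure sf)
  have DYZ: "distributed M (lborel \<Otimes>\<^sub>M lborel) (\<lambda>\<omega>. (Y \<omega>, Z \<omega>)) (\<lambda>(y, z). g y * k z)"
    by (rule distributed_joint_indep[OF sf sf DY DZ indep3_pairs(1)])
  have DXYZ: "distributed M (lborel \<Otimes>\<^sub>M (lborel \<Otimes>\<^sub>M lborel)) (\<lambda>\<omega>. (X \<omega>, (Y \<omega>, Z \<omega>)))
      (\<lambda>(x, p). f x * (\<lambda>(y, z). g y * k z) p)"
    by (rule distributed_joint_indep'[OF sf sf2 DX DYZ indep3_pair_distr])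
  have [measurable]: "f \<in> borel_measurable borel" "g \<in> borel_measurable borel" "k \<in> borel_measurable borel"
    using DX DY DZ by (simp_all add: distributed_borel_measurable)
  have "(\<integral>\<^sup>+\<omega>. H (X \<omega>, Y \<omega>, Z \<omega>) \<partial>M)
      = (\<integral>\<^sup>+p. (\<lambda>(x, p). f x * (\<lambda>(y, z). g y * k z) p) p * H p \<partial>(lborel \<Otimes>\<^sub>M (lborel \<Otimes>\<^sub>M lborel)))"
    by (rule distributed_nn_integral[OF DXYZ, symmetric]) simp
  also have "\<dots> = (\<integral>\<^sup>+x. \<integral>\<^sup>+p. f x * (g (fst p) * k (snd p)) * H (x, p) \<partial>(lborel \<Otimes>\<^sub>M lborel) \<partial>lborel)"
    by (subst sigma_finite_measure.nn_integral_fst[OF sf2, symmetric]) (auto simp: split_beta')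
  also have "\<dots> = (\<integral>\<^sup>+x. \<integral>\<^sup>+y. \<integral>\<^sup>+z. f x * g y * k z * H (x, y, z) \<partial>lborel \<partial>lborel \<partial>lborel)"
  proof (rule nn_integral_cong)
    fix x :: real
    show "(\<integral>\<^sup>+p. f x * (g (fst p) * k (snd p)) * H (x, p) \<partial>(lborel \<Otimes>\<^sub>M lborel))
        = (\<integral>\<^sup>+y. \<integral>\<^sup>+z. f x * g y * k z * H (x, y, z) \<partial>lborel \<partial>lborel)"
      by (subst sigma_finite_measure.nn_integral_fst[OF sf, symmetric]) (auto simp: mult.assoc)
  qed
  finally show ?thesis .
qed


lemma density_ratio_expectation_le_one:
  fixes f k :: "real \<Rightarrow> ennreal" and g u w s :: "real \<Rightarrow> real"
  assumes DX: "distributed M lborel X f" and DZ: "distributed M lborel Z k"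
    and DY: "distributed M lborel Y g"
    and DU: "distributed M lborel (\<lambda>\<omega>. X \<omega> + Y \<omega>) u"
    and DW: "distributed M lborel (\<lambda>\<omega>. Y \<omega> + Z \<omega>) w"
    and DS: "distributed M lborel (\<lambda>\<omega>. X \<omega> + Y \<omega> + Z \<omega>) s"
    and nonneg: "\<And>t. 0 \<le> g t" "\<And>t. 0 \<le> u t" "\<And>t. 0 \<le> w t" "\<And>t. 0 \<le> s t"
  shows "(\<integral>\<^sup>+\<omega>. ennreal (u (X \<omega> + Y \<omega>) * w (Y \<omega> + Z \<omega>) / (s (X \<omega> + Y \<omega> + Z \<omega>) * g (Y \<omega>))) \<partial>M) \<le> 1"
proof -
  have [measurable]: "f \<in> borel_measurable borel" "k \<in> borel_measurable borel"
    using DX DZ by (simp_all add: distributed_borel_measurable)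
  have [measurable]: "g \<in> borel_measurable borel" "u \<in> borel_measurable borel"
    "w \<in> borel_measurable borel" "s \<in> borel_measurable borel"
    using distributed_real_measurable[OF _ DY] distributed_real_measurable[OF _ DU]
      distributed_real_measurable[OF _ DW] distributed_real_measurable[OF _ DS] nonneg by simp_all
  (* the factor g(y) of the joint density cancels against 1 / g(y) *)
  have cancel: "ennreal (g y) * ennreal (u (x + y) * w (y + z) / (s (x + y + z) * g y))
      \<le> ennreal (u (x + y)) * ennreal (w (y + z)) * ennreal (1 / s (x + y + z))" for x y z
  proof (cases "g y = 0")
    case False
    then have "g y * (u (x + y) * w (y + z) / (s (x + y + z) * g y)) = u (x + y) * w (y + z) * (1 / s (x + y + z))"
      by (simp add: field_simps)
    then show ?thesis
      using nonneg by (simp add: ennreal_mult[symmetric] del: ennreal_mult)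
  qed simp
  (* both convolutions are densities of X + Y + Z, so they agree with s a.e. *)
  have conv_w: "AE t in lborel. (\<integral>\<^sup>+x. ennreal (w (t - x)) * f x \<partial>lborel) = ennreal (s t)"
  proof -
    have "(\<lambda>\<omega>. Y \<omega> + Z \<omega> + X \<omega>) = (\<lambda>\<omega>. X \<omega> + Y \<omega> + Z \<omega>)" by (auto simp: fun_eq_iff)
    then have "distributed M lborel (\<lambda>\<omega>. X \<omega> + Y \<omega> + Z \<omega>) (\<lambda>t. \<integral>\<^sup>+x. ennreal (w (t - x)) * f x \<partial>lborel)"
      using distributed_convolution[OF indep3_pairs(4) DW DX] by simp
    then show ?thesis
      using distributed_unique[OF _ DS] by simp
  qed
  have conv_u: "AE t in lborel. (\<integral>\<^sup>+z. ennreal (u (t - z)) * k z \<partial>lborel) = ennreal (s t)"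
    using distributed_unique[OF distributed_convolution[OF indep3_pairs(5) DU DZ] DS] .
  have "(\<integral>\<^sup>+\<omega>. ennreal (u (X \<omega> + Y \<omega>) * w (Y \<omega> + Z \<omega>) / (s (X \<omega> + Y \<omega> + Z \<omega>) * g (Y \<omega>))) \<partial>M)
      = (\<integral>\<^sup>+x. \<integral>\<^sup>+y. \<integral>\<^sup>+z. f x * ennreal (g y) * k z
           * ennreal (u (x + y) * w (y + z) / (s (x + y + z) * g y)) \<partial>lborel \<partial>lborel \<partial>lborel)"
    using nn_integral_indep3[OF DX DY DZ,
        of "\<lambda>(x, y, z). ennreal (u (x + y) * w (y + z) / (s (x + y + z) * g y))"] by simp
  also have "\<dots> \<le> (\<integral>\<^sup>+x. \<integral>\<^sup>+y. \<integral>\<^sup>+z. f x * k z * ennreal (u (x + y)) * ennreal (w (y + z))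
           * ennreal (1 / s (x + y + z)) \<partial>lborel \<partial>lborel \<partial>lborel)"
  proof (intro nn_integral_mono)
    fix x y z :: real
    show "f x * ennreal (g y) * k z * ennreal (u (x + y) * w (y + z) / (s (x + y + z) * g y))
        \<le> f x * k z * ennreal (u (x + y)) * ennreal (w (y + z)) * ennreal (1 / s (x + y + z))"
      using mult_left_mono[OF cancel[of y x z], of "f x * k z"] by (simp add: ac_simps)
  qed
  also have "\<dots> = (\<integral>\<^sup>+t. (\<integral>\<^sup>+x. ennreal (w (t - x)) * f x \<partial>lborel) * ennreal (1 / s t)
           * (\<integral>\<^sup>+z. ennreal (u (t - z)) * k z \<partial>lborel) \<partial>lborel)"
    by (rule nn_integral_triple_convolution) simp_all
  also have "\<dots> \<le> (\<integral>\<^sup>+t. ennreal (s t) \<partial>lborel)"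
    using conv_w conv_u
  proof (intro nn_integral_mono_AE, eventually_elim)
    case (elim t)
    have "ennreal (s t) * ennreal (1 / s t) * ennreal (s t) = ennreal (s t * (1 / s t) * s t)"
      using nonneg by (simp add: ennreal_mult[symmetric] del: ennreal_mult)
    also have "\<dots> \<le> ennreal (s t)"
      using nonneg(4)[of t] by (intro ennreal_leI) (cases "s t = 0", auto)
    finally show ?case using elim by simp
  qed
  also have "\<dots> = 1"
    using distributed_nn_integral[OF DS, of "\<lambda>_. 1"] by (simp add: emeasure_space_1)
  finally show ?thesis .
qed

text \<open>The entropy inequality h(X+Y+Z) + h(Y) \<le> h(X+Y) + h(Y+Z): its deficit is
  -E[ln R] for the ratio R above, which is nonnegative by Gibbs' inequality.\<close>
lemma dent_sum_submodular:
  fixes f k :: "real \<Rightarrow> ennreal"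
  assumes DX: "distributed M lborel X f" and DZ: "distributed M lborel Z k"
    and FY: "information_space.finite_entropy M (exp 1) lborel Y g"
    and FU: "information_space.finite_entropy M (exp 1) lborel (\<lambda>\<omega>. X \<omega> + Y \<omega>) u"
    and FW: "information_space.finite_entropy M (exp 1) lborel (\<lambda>\<omega>. Y \<omega> + Z \<omega>) w"
    and FS: "information_space.finite_entropy M (exp 1) lborel (\<lambda>\<omega>. X \<omega> + Y \<omega> + Z \<omega>) s"
  shows "dent M lborel (\<lambda>\<omega>. X \<omega> + Y \<omega> + Z \<omega>) + dent M lborel Y
       \<le> dent M lborel (\<lambda>\<omega>. X \<omega> + Y \<omega>) + dent M lborel (\<lambda>\<omega>. Y \<omega> + Z \<omega>)"
proof -
  interpret information_space M "exp 1" by (rule information_space_exp1)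
  note dists = FY[THEN finite_entropy_distributed] FU[THEN finite_entropy_distributed]
    FW[THEN finite_entropy_distributed] FS[THEN finite_entropy_distributed]
  have nonneg: "\<And>t. 0 \<le> g t" "\<And>t. 0 \<le> u t" "\<And>t. 0 \<le> w t" "\<And>t. 0 \<le> s t"
    using FY FU FW FS by (simp_all add: finite_entropy_nn)
  have [measurable]: "X \<in> borel_measurable M" "Y \<in> borel_measurable M" "Z \<in> borel_measurable M"
    using distributed_measurable[OF DX] distributed_measurable[OF dists(1)]
      distributed_measurable[OF DZ] by simp_all
  have [measurable]: "g \<in> borel_measurable borel" "u \<in> borel_measurable borel"
    "w \<in> borel_measurable borel" "s \<in> borel_measurable borel"
    using FY FU FW FS by (simp_all add: finite_entropy_measurable[where S = lborel, simplified])
  define R where "R \<omega> = u (X \<omega> + Y \<omega>) * w (Y \<omega> + Z \<omega>) / (s (X \<omega> + Y \<omega> + Z \<omega>) * g (Y \<omega>))" for \<omega>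
  define L where "L \<omega> = ln (u (X \<omega> + Y \<omega>)) + ln (w (Y \<omega> + Z \<omega>)) - ln (s (X \<omega> + Y \<omega> + Z \<omega>)) - ln (g (Y \<omega>))"
    for \<omega>
  note integrable = dent_eq_neg_expectation(2)[OF FU] dent_eq_neg_expectation(2)[OF FW]
    dent_eq_neg_expectation(2)[OF FS] dent_eq_neg_expectation(2)[OF FY]
  have "(\<integral>\<omega>. L \<omega> \<partial>M) \<le> 0"
  proof (rule expectation_ln_le_zero)
    show "R \<in> borel_measurable M" "\<And>\<omega>. 0 \<le> R \<omega>"
      unfolding R_def using nonneg by simp_all
    show "(\<integral>\<^sup>+\<omega>. ennreal (R \<omega>) \<partial>M) \<le> 1"
      unfolding R_def by (rule density_ratio_expectation_le_one[OF DX DZ dists nonneg])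
    show "integrable M L"
      unfolding L_def using integrable by auto
    show "AE \<omega> in M. 0 < R \<omega> \<and> L \<omega> = ln (R \<omega>)"
      using finite_entropy_density_pos_AE[OF FU] finite_entropy_density_pos_AE[OF FW]
        finite_entropy_density_pos_AE[OF FS] finite_entropy_density_pos_AE[OF FY]
      by eventually_elim (simp add: R_def L_def ln_mult ln_div)
  qed
  moreover have "(\<integral>\<omega>. L \<omega> \<partial>M) = dent M lborel (\<lambda>\<omega>. X \<omega> + Y \<omega> + Z \<omega>) + dent M lborel Y
      - dent M lborel (\<lambda>\<omega>. X \<omega> + Y \<omega>) - dent M lborel (\<lambda>\<omega>. Y \<omega> + Z \<omega>)"
    unfolding L_def dent_eq_neg_expectation(1)[OF FU] dent_eq_neg_expectation(1)[OF FW]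
      dent_eq_neg_expectation(1)[OF FS] dent_eq_neg_expectation(1)[OF FY]
    using integrable by simp
  ultimately show ?thesis by simp
qed

end

end


text \<open>With I(S; X) = h(S) + h(X) - h(S, X) and the shear identities
  h(X+Y+Z, X) = h(Y+Z) + h(X) and h(X+Y, X) = h(Y) + h(X), the two mutual
  informations reduce to h(X+Y+Z) - h(Y+Z) and h(X+Y) - h(Y).\<close>
theorem mainTheorem4:
  fixes M :: "'a measure" and X Y Z :: "'a \<Rightarrow> real"
  assumes "prob_space M"
    and "prob_space.indep_vars M (\<lambda>_. borel)
           (\<lambda>i::nat. if i = 0 then X else if i = 1 then Y else Z) {0, 1, 2}"
    and "\<exists>f. distributed M lborel X f"
    and "\<exists>f. distributed M lborel Y f"
    and "\<exists>f. distributed M lborel Z f"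
    and "has_finite_dent M lborel X"
    and "has_finite_dent M lborel Y"
    and "has_finite_dent M lborel (\<lambda>\<omega>. X \<omega> + Y \<omega>)"
    and "has_finite_dent M lborel (\<lambda>\<omega>. Y \<omega> + Z \<omega>)"
    and "has_finite_dent M lborel (\<lambda>\<omega>. X \<omega> + Y \<omega> + Z \<omega>)"
    and "has_finite_dent M (lborel \<Otimes>\<^sub>M lborel) (\<lambda>\<omega>. (X \<omega> + Y \<omega> + Z \<omega>, X \<omega>))"
    and "has_finite_dent M (lborel \<Otimes>\<^sub>M lborel) (\<lambda>\<omega>. (X \<omega> + Y \<omega>, X \<omega>))"
  shows "dent M lborel (\<lambda>\<omega>. X \<omega> + Y \<omega> + Z \<omega>) + dent M lborel Y
           \<le> dent M lborel (\<lambda>\<omega>. X \<omega> + Y \<omega>) + dent M lborel (\<lambda>\<omega>. Y \<omega> + Z \<omega>)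
         \<and> ((dent M lborel (\<lambda>\<omega>. X \<omega> + Y \<omega> + Z \<omega>) + dent M lborel Y
              \<le> dent M lborel (\<lambda>\<omega>. X \<omega> + Y \<omega>) + dent M lborel (\<lambda>\<omega>. Y \<omega> + Z \<omega>))
            \<longleftrightarrow> mutinf M (\<lambda>\<omega>. X \<omega> + Y \<omega> + Z \<omega>) X \<le> mutinf M (\<lambda>\<omega>. X \<omega> + Y \<omega>) X)"
proof -
  interpret prob_space M by (rule assms(1))
  note ind = assms(2)
  obtain k where DZ: "distributed M lborel Z k" using assms(5) by blast
  obtain fx g u w s q1 q2 where FX: "information_space.finite_entropy M (exp 1) lborel X fx"
    and FY: "information_space.finite_entropy M (exp 1) lborel Y g"
    and FU: "information_space.finite_entropy M (exp 1) lborel (\<lambda>\<omega>. X \<omega> + Y \<omega>) u"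
    and FW: "information_space.finite_entropy M (exp 1) lborel (\<lambda>\<omega>. Y \<omega> + Z \<omega>) w"
    and FS: "information_space.finite_entropy M (exp 1) lborel (\<lambda>\<omega>. X \<omega> + Y \<omega> + Z \<omega>) s"
    and FQ1: "information_space.finite_entropy M (exp 1) (lborel \<Otimes>\<^sub>M lborel) (\<lambda>\<omega>. (Y \<omega> + Z \<omega> + X \<omega>, X \<omega>)) q1"
    and FQ2: "information_space.finite_entropy M (exp 1) (lborel \<Otimes>\<^sub>M lborel) (\<lambda>\<omega>. (Y \<omega> + X \<omega>, X \<omega>)) q2"
    using assms(6-12) by (auto simp: has_finite_dent_def add_ac)
  have DX: "distributed M lborel X fx"
    using FX information_space.finite_entropy_distributed[OF information_space_exp1] by blast
  have submodular: "dent M lborel (\<lambda>\<omega>. X \<omega> + Y \<omega> + Z \<omega>) + dent M lborel Y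
      \<le> dent M lborel (\<lambda>\<omega>. X \<omega> + Y \<omega>) + dent M lborel (\<lambda>\<omega>. Y \<omega> + Z \<omega>)"
    by (rule dent_sum_submodular[OF ind DX DZ FY FU FW FS])
  have "dent M (lborel \<Otimes>\<^sub>M lborel) (\<lambda>\<omega>. (Y \<omega> + Z \<omega> + X \<omega>, X \<omega>)) = dent M lborel (\<lambda>\<omega>. Y \<omega> + Z \<omega>) + dent M lborel X"
    by (rule dent_shear_indep[OF FW FX FQ1 indep3_pairs(3)[OF ind]])
  moreover have "dent M (lborel \<Otimes>\<^sub>M lborel) (\<lambda>\<omega>. (Y \<omega> + X \<omega>, X \<omega>)) = dent M lborel Y + dent M lborel X"
    by (rule dent_shear_indep[OF FY FX FQ2 indep3_pairs(2)[OF ind]])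
  ultimately show ?thesis
    using submodular by (simp add: mutinf_def add_ac)
qed

end
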